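(* Let $G$ be a finite group with $|G|\ge3$ and let $\mathcal C=\mathcal C(\mathcal B(G),\mathcal F(G))$. Then (1) $\mathsf D(G)\le\omega(G)\le\mathsf D(G)+\mathsf d(\mathcal C)$; (2) $\mathsf D(G/G')\le\mathsf D(\mathcal C)$, with equality if $G$ is abelian.
   Context: For a finite group $G$ (multiplicative, identity $1_G$, commutator subgroup $G'$), $\mathcal F(G)$ is the free abelian monoid with basis $G$ (sequences $S=g_1\boldsymbol{\cdot}\ldots\boldsymbol{\cdot}g_\ell$, operation $\boldsymbol{\cdot}$, length $|S|=\ell$). $\pi(S)=\{g_{\tau(1)}\cdots g_{\tau(\ell)}:\tau\text{ a permutation of }[1,\ell]\}$, $\pi$ of the empty sequence is $\{1_G\}$, $\mathcal B(G)=\{S\in\mathcal F(G):1_G\in\pi(S)\}$, $\mathcal A(G)$ its set of atoms, and $\mathsf D(G)=\max\{|U|:U\in\mathcal A(G)\}$ (applied to the group $G/G'$ this defines $\mathsf D(G/G')$). For $S,S'\in\mathcal F(G)$, $S\sim S'$ means: for all $T\in\mathcal F(G)$, $S\boldsymbol{\cdot}T\in\mathcal B(G)\iff S'\boldsymbol{\cdot}T\in\mathcal B(G)$; the classes form the class semigroup $\mathcal C(\mathcal B(G),\mathcal F(G))$, written additively with $[S]+[T]=[S\boldsymbol{\cdot}T]$. For an atomic monoid $H$ and $b\in H$, $\omega(H,b)$ is the smallest $N\in\mathbb N_0\cup\{\infty\}$ such that whenever $b\mid a_1\cdots a_n$ in $H$ ($a_i\in H$) there is $\Omega\subset[1,n]$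 with $|\Omega|\le N$ and $b\mid\prod_{\nu\in\Omega}a_\nu$ in $H$; $\omega(H)=\sup\{\omega(H,u):u\in\mathcal A(H)\}$ and $\omega(G)=\omega(\mathcal B(G))$. For an additive commutative semigroup $\mathcal C$ with zero (empty sums equal $0$): $\mathsf d(\mathcal C)$ is the smallest $d\in\mathbb N_0\cup\{\infty\}$ such that for all $c_1,\dots,c_n\in\mathcal C$ there is $\Omega\subset[1,n]$, $|\Omega|\le d$, with $\sum_{\nu=1}^n c_\nu=\sum_{\nu\in\Omega}c_\nu$; $\mathsf D(\mathcal C)$ is the smallest $\ell\in\mathbb N\cup\{\infty\}$ such that for all $n\ge\ell$ and $c_1,\dots,c_n\in\mathcal C$ there is $\Omega\subsetneq[1,n]$ with $\sum_{\nu=1}^n c_\nu=\sum_{\nu\in\Omega}c_\nu$. *)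

theory Defs
  imports "HOL-Algebra.Algebra" "HOL-Library.Multiset" "HOL-Library.Extended_Nat"
begin

definition seqs :: "('a, 'b) monoid_scheme \<Rightarrow> 'a multiset set" where
  "seqs G = {S. set_mset S \<subseteq> carrier G}"

definition prods :: "('a, 'b) monoid_scheme \<Rightarrow> 'a multiset \<Rightarrow> 'a set" where
  "prods G S = {foldr (\<lambda>x y. x \<otimes>\<^bsub>G\<^esub> y) xs \<one>\<^bsub>G\<^esub> | xs. mset xs = S}"

definition prod_one_seqs :: "('a, 'b) monoid_scheme \<Rightarrow> 'a multiset set" where
  "prod_one_seqs G = {S \<in> seqs G. \<one>\<^bsub>G\<^esub> \<in> prods G S}"

text \<open>Atoms of the monoid B(G) (its only unit is the empty sequence).\<close>
definition atoms :: "('a, 'b) monoid_scheme \<Rightarrow> 'a multiset set" where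
  "atoms G = {U \<in> prod_one_seqs G. U \<noteq> {#} \<and>
      (\<forall>A \<in> prod_one_seqs G. \<forall>B \<in> prod_one_seqs G. U = A + B \<longrightarrow> A = {#} \<or> B = {#})}"

definition davenport :: "('a, 'b) monoid_scheme \<Rightarrow> enat" where
  "davenport G = Sup ((\<lambda>U. enat (size U)) ` atoms G)"

definition bdvd :: "('a, 'b) monoid_scheme \<Rightarrow> 'a multiset \<Rightarrow> 'a multiset \<Rightarrow> bool" where
  "bdvd G b a \<longleftrightarrow> (\<exists>c \<in> prod_one_seqs G. a = b + c)"

definition omega_elem :: "('a, 'b) monoid_scheme \<Rightarrow> 'a multiset \<Rightarrow> enat" where
  "omega_elem G b = Inf {N :: enat. \<forall>as :: 'a multiset list.
      set as \<subseteq> prod_one_seqs G \<and> bdvd G b (sum_list as) \<longrightarrow>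
      (\<exists>\<Omega> \<subseteq> {..<length as}. enat (card \<Omega>) \<le> N \<and> bdvd G b (\<Sum>i\<in>\<Omega>. as ! i))}"

definition omega_grp :: "('a, 'b) monoid_scheme \<Rightarrow> enat" where
  "omega_grp G = Sup (omega_elem G ` atoms G)"

definition seq_equiv :: "('a, 'b) monoid_scheme \<Rightarrow> 'a multiset \<Rightarrow> 'a multiset \<Rightarrow> bool" where
  "seq_equiv G S S' \<longleftrightarrow> (\<forall>T \<in> seqs G. S + T \<in> prod_one_seqs G \<longleftrightarrow> S' + T \<in> prod_one_seqs G)"

definition seq_class :: "('a, 'b) monoid_scheme \<Rightarrow> 'a multiset \<Rightarrow> 'a multiset set" where
  "seq_class G S = {S' \<in> seqs G. seq_equiv G S S'}"

definition class_sg :: "('a, 'b) monoid_scheme \<Rightarrow> 'a multiset set set" where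
  "class_sg G = seq_class G ` seqs G"

definition class_add :: "('a, 'b) monoid_scheme \<Rightarrow> 'a multiset set \<Rightarrow> 'a multiset set \<Rightarrow> 'a multiset set" where
  "class_add G A B = seq_class G ((SOME s. s \<in> A) + (SOME t. t \<in> B))"

definition class_zero :: "('a, 'b) monoid_scheme \<Rightarrow> 'a multiset set" where
  "class_zero G = seq_class G {#}"

text \<open>A commutative semigroup with zero is given by carrier C, addition plus_op, zero z.
  The sum of a list (empty sum = z), and the subsum indexed by a set of positions.\<close>
definition gsum :: "('c \<Rightarrow> 'c \<Rightarrow> 'c) \<Rightarrow> 'c \<Rightarrow> 'c list \<Rightarrow> 'c" where
  "gsum plus_op z cs = foldr plus_op cs z"

definition subsum :: "('c \<Rightarrow> 'c \<Rightarrow> 'c) \<Rightarrow> 'c \<Rightarrow> 'c list \<Rightarrow> nat set \<Rightarrow> 'c" where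
  "subsum plus_op z cs \<Omega> = gsum plus_op z (map (\<lambda>i. cs ! i) (sorted_list_of_set \<Omega>))"

definition small_dav :: "'c set \<Rightarrow> ('c \<Rightarrow> 'c \<Rightarrow> 'c) \<Rightarrow> 'c \<Rightarrow> enat" where
  "small_dav C plus_op z = Inf {d :: enat. \<forall>cs. set cs \<subseteq> C \<longrightarrow>
      (\<exists>\<Omega> \<subseteq> {..<length cs}. enat (card \<Omega>) \<le> d \<and> gsum plus_op z cs = subsum plus_op z cs \<Omega>)}"

definition large_dav :: "'c set \<Rightarrow> ('c \<Rightarrow> 'c \<Rightarrow> 'c) \<Rightarrow> 'c \<Rightarrow> enat" where
  "large_dav C plus_op z = Inf {l :: enat. l \<ge> 1 \<and> (\<forall>cs. set cs \<subseteq> C \<and> enat (length cs) \<ge> l \<longrightarrow>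
      (\<exists>\<Omega> \<subset> {..<length cs}. gsum plus_op z cs = subsum plus_op z cs \<Omega>))}"

end

theory Submission
  imports Defs
begin

text \<open>
  Lower bound for \<open>\<omega>\<close>: an atom \<open>U = g\<^sub>1 \<cdots> g\<^sub>\<ell>\<close> with \<open>\<ell> \<ge> 3\<close> divides the product of the
  product-one sequences \<open>g\<^sub>i g\<^sub>i\<^sup>-\<^sup>1\<close>, but no proper subproduct, because such an atom is never
  of the form \<open>R R\<^sup>-\<^sup>1\<close>; shorter atoms are dominated by an atom of length 3, which exists
  since \<open>|G| \<ge> 3\<close>. Upper bound: if \<open>U\<close> divides \<open>A\<^sub>1 \<cdots> A\<^sub>n\<close>, at most \<open>|U|\<close> factors cover \<open>U\<close>,
  and the classes of the remaining factors sum to the class of at most \<open>d(\<C>)\<close> of them.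

  Lower bound for \<open>D(\<C>)\<close>: lifting all but one term of an atom of the abelian group \<open>G/G'\<close>
  gives a sequence of classes without a proper subsum equal to the whole sum, since such a
  subsum would produce a proper product-one subsequence of the atom. For abelian \<open>G\<close> the
  class of a sequence is the class of the one-term sequence formed by its product, so among
  \<open>D(G)\<close> classes some nonempty subfamily sums to the zero class and can be dropped; and
  \<open>G/G' \<cong> G\<close>.
\<close>

section \<open>Products and product-one sequences\<close>

definition list_prod :: "('a, 'b) monoid_scheme \<Rightarrow> 'a list \<Rightarrow> 'a" where
  "list_prod G xs = foldr (\<lambda>x y. x \<otimes>\<^bsub>G\<^esub> y) xs \<one>\<^bsub>G\<^esub>"

lemma list_prod_Nil [simp]: "list_prod G [] = \<one>\<^bsub>G\<^esub>"
  by (simp add: list_prod_def)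

lemma list_prod_Cons [simp]: "list_prod G (x # xs) = x \<otimes>\<^bsub>G\<^esub> list_prod G xs"
  by (simp add: list_prod_def)

lemma prod_one_seqs_iff:
  "S \<in> prod_one_seqs G \<longleftrightarrow>
     set_mset S \<subseteq> carrier G \<and> (\<exists>xs. mset xs = S \<and> list_prod G xs = \<one>\<^bsub>G\<^esub>)"
  by (auto simp: prod_one_seqs_def seqs_def prods_def list_prod_def) metis

lemma prod_one_seqs_in_seqs: "S \<in> prod_one_seqs G \<Longrightarrow> S \<in> seqs G"
  by (simp add: prod_one_seqs_def)

lemma seqs_iff: "S \<in> seqs G \<longleftrightarrow> set_mset S \<subseteq> carrier G"
  by (simp add: seqs_def)

lemma seqs_add [simp]: "S \<in> seqs G \<Longrightarrow> T \<in> seqs G \<Longrightarrow> S + T \<in> seqs G"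
  by (simp add: seqs_def)

lemma seqs_sum: "(\<And>i. i \<in> I \<Longrightarrow> f i \<in> seqs G) \<Longrightarrow> (\<Sum>i\<in>I. f i) \<in> seqs G"
  by (induction I rule: infinite_finite_induct) (auto simp: seqs_def)

lemma atomsD:
  assumes "U \<in> atoms G"
  shows "U \<in> prod_one_seqs G" "U \<noteq> {#}"
    and "A \<in> prod_one_seqs G \<Longrightarrow> B \<in> prod_one_seqs G \<Longrightarrow> U = A + B \<Longrightarrow> A = {#} \<or> B = {#}"
  using assms by (auto simp: atoms_def)

lemma size_le_davenport: "U \<in> atoms G \<Longrightarrow> enat (size U) \<le> davenport G"
  unfolding davenport_def by (rule SUP_upper)

lemma mset_eq_sum_nth: "mset xs = (\<Sum>i<length xs. {#xs ! i#})"
proof -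
  have "mset (map f [0..<n]) = (\<Sum>i<n. {#f i#})" for f :: "nat \<Rightarrow> 'a" and n
    by (induction n) auto
  from this[of "nth xs" "length xs"] show ?thesis by (simp add: map_nth)
qed

lemma image_mset_sum: "image_mset f (\<Sum>i\<in>I. M i) = (\<Sum>i\<in>I. image_mset f (M i))"
  by (induction I rule: infinite_finite_induct) auto

lemma subseteq_sum_small_cover:
  fixes f :: "'i \<Rightarrow> 'a multiset"
  assumes "finite I" "u \<subseteq># (\<Sum>i\<in>I. f i)"
  shows "\<exists>\<Omega>\<subseteq>I. card \<Omega> \<le> size u \<and> u \<subseteq># (\<Sum>i\<in>\<Omega>. f i)"
  using assms(2)
proof (induction u)
  case (add x u)
  then obtain \<Omega> where \<Omega>: "\<Omega> \<subseteq> I" "card \<Omega> \<le> size u" "u \<subseteq># (\<Sum>i\<in>\<Omega>. f i)"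
    by (meson mset_subset_eq_insertD subset_mset.less_imp_le)
  have fin: "finite \<Omega>"
    using \<Omega>(1) assms(1) finite_subset by blast
  show ?case
  proof (cases "add_mset x u \<subseteq># (\<Sum>i\<in>\<Omega>. f i)")
    case True
    with \<Omega> show ?thesis by auto
  next
    case False
    with \<Omega>(3) have "count (\<Sum>i\<in>\<Omega>. f i) x \<le> count u x"
      by (auto simp: subseteq_mset_def not_less_eq_eq[symmetric] split: if_splits)
    moreover have "count (add_mset x u) x \<le> count (\<Sum>i\<in>I. f i) x"
      using add.prems by (simp only: subseteq_mset_def)
    moreover have "(\<Sum>i\<in>I. f i) = (\<Sum>i\<in>I - \<Omega>. f i) + (\<Sum>i\<in>\<Omega>. f i)"
      using sum.subset_diff[OF \<Omega>(1) assms(1)] .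
    ultimately have "(\<Sum>i\<in>I - \<Omega>. count (f i) x) \<noteq> 0"
      by (simp add: count_sum)
    from sum.not_neutral_contains_not_neutral[OF this]
    obtain i where i: "i \<in> I - \<Omega>" "x \<in># f i"
      by (auto simp: count_eq_zero_iff)
    then have "{#x#} + u \<subseteq># f i + (\<Sum>i\<in>\<Omega>. f i)"
      using \<Omega>(3) by (intro subset_mset.add_mono) auto
    then have "add_mset x u \<subseteq># f i + (\<Sum>i\<in>\<Omega>. f i)"
      by simp
    with i \<Omega> fin show ?thesis
      by (intro exI[of _ "insert i \<Omega>"]) auto
  qed
qed (auto intro: exI[of _ "{}"])

lemma sub_sum_singletons:
  assumes "finite I" "A \<subseteq># (\<Sum>i\<in>I. {#f i#})"
  shows "\<exists>\<Lambda>\<subseteq>I. A = (\<Sum>i\<in>\<Lambda>. {#f i#})"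
  using assms
proof (induction I arbitrary: A rule: finite_induct)
  case (insert j I)
  show ?case
  proof (cases "f j \<in># A")
    case True
    then have "A - {#f j#} \<subseteq># (\<Sum>i\<in>I. {#f i#})"
      using insert by (simp add: subset_eq_diff_conv)
    then obtain \<Lambda> where \<Lambda>: "\<Lambda> \<subseteq> I" "A - {#f j#} = (\<Sum>i\<in>\<Lambda>. {#f i#})"
      using insert.IH by blast
    have "A = add_mset (f j) (A - {#f j#})"
      using True by simp
    also have "\<dots> = (\<Sum>i\<in>insert j \<Lambda>. {#f i#})"
      using \<Lambda> insert.hyps finite_subset by (subst sum.insert) auto
    finally show ?thesis
      using \<Lambda>(1) by (intro exI[of _ "insert j \<Lambda>"]) auto
  next
    case False
    then have "A \<subseteq># (\<Sum>i\<in>I. {#f i#})"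
      using insert subset_eq_diff_conv[of A "{#f j#}"] by (simp add: diff_single_trivial add.commute)
    then show ?thesis
      using insert.IH by blast
  qed
qed simp

context group
begin

lemma list_prod_closed [simp]: "set xs \<subseteq> carrier G \<Longrightarrow> list_prod G xs \<in> carrier G"
  by (induction xs) auto

lemma list_prod_append:
  "set xs \<subseteq> carrier G \<Longrightarrow> set ys \<subseteq> carrier G \<Longrightarrow>
     list_prod G (xs @ ys) = list_prod G xs \<otimes> list_prod G ys"
  by (induction xs) (auto simp: m_assoc)

lemma list_prod_rev_inv:
  "set xs \<subseteq> carrier G \<Longrightarrow> list_prod G (rev (map (\<lambda>x. inv x) xs)) = inv (list_prod G xs)"
proof (induction xs)
  case (Cons x xs)
  then show ?case
    using list_prod_append[of "rev (map (\<lambda>x. inv x) xs)" "[inv x]"]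
    by (auto simp: inv_mult_group)
qed simp

lemma prod_one_seqs_empty [simp]: "{#} \<in> prod_one_seqs G"
  by (auto simp: prod_one_seqs_iff intro!: exI[of _ "[]"])

lemma prod_one_seqs_add:
  assumes "S \<in> prod_one_seqs G" "T \<in> prod_one_seqs G"
  shows "S + T \<in> prod_one_seqs G"
proof -
  obtain xs ys where "mset xs = S" "list_prod G xs = \<one>" "mset ys = T" "list_prod G ys = \<one>"
    using assms by (auto simp: prod_one_seqs_iff)
  with assms show ?thesis
    by (auto simp: prod_one_seqs_iff list_prod_append intro!: exI[of _ "xs @ ys"])
qed

lemma prod_one_seqs_pair: "x \<in> carrier G \<Longrightarrow> {#x, inv x#} \<in> prod_one_seqs G"
  by (auto simp: prod_one_seqs_iff intro!: exI[of _ "[x, inv x]"])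

lemma prod_one_seqs_image_inv:
  assumes "S \<in> prod_one_seqs G"
  shows "image_mset (\<lambda>x. inv x) S \<in> prod_one_seqs G"
proof -
  obtain xs where "mset xs = S" "list_prod G xs = \<one>"
    using assms by (auto simp: prod_one_seqs_iff)
  with assms show ?thesis
    by (auto simp: prod_one_seqs_iff list_prod_rev_inv intro!: exI[of _ "rev (map (\<lambda>x. inv x) xs)"])
qed

lemma prod_one_seqs_double:
  "set_mset R \<subseteq> carrier G \<Longrightarrow> R + image_mset (\<lambda>x. inv x) R \<in> prod_one_seqs G"
proof (induction R)
  case (add x R)
  have "{#x, inv x#} + (R + image_mset (\<lambda>x. inv x) R) \<in> prod_one_seqs G"
    using add by (intro prod_one_seqs_add[OF prod_one_seqs_pair add.IH]) auto
  then show ?case by (simp add: add_mset_commute)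
qed simp

lemma image_mset_inv_inv:
  "set_mset A \<subseteq> carrier G \<Longrightarrow> image_mset (\<lambda>x. inv x) (image_mset (\<lambda>x. inv x) A) = A"
  by (induction A) auto

lemma one_atom: "{#\<one>#} \<in> atoms G"
  by (auto simp: atoms_def prod_one_seqs_iff single_is_union intro!: exI[of _ "[\<one>]"])

lemma exists_prod_one_completion:
  assumes "S \<in> seqs G"
  obtains t where "t \<in> carrier G" "add_mset t S \<in> prod_one_seqs G"
proof -
  obtain xs where xs: "mset xs = S" "set xs \<subseteq> carrier G"
    using assms by (metis ex_mset seqs_iff set_mset_mset)
  then have "list_prod G (xs @ [inv (list_prod G xs)]) = \<one>"
    by (simp add: list_prod_append)
  with xs show thesis
    by (intro that[of "inv (list_prod G xs)"]) (auto simp: prod_one_seqs_iff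
        intro!: exI[of _ "xs @ [inv (list_prod G xs)]"])
qed

text \<open>Complete \<open>S\<close> by a term \<open>t\<close> to a product-one sequence; being too long for an atom,
  it splits into two nonempty product-one parts, and the part avoiding \<open>t\<close> lies in \<open>S\<close>.\<close>
lemma exists_prod_one_subseq:
  assumes "S \<in> seqs G" "davenport G \<le> enat (size S)"
  obtains T where "T \<subseteq># S" "T \<noteq> {#}" "T \<in> prod_one_seqs G"
proof -
  obtain t where t: "t \<in> carrier G" "add_mset t S \<in> prod_one_seqs G"
    using exists_prod_one_completion[OF assms(1)] .
  have "\<not> enat (size (add_mset t S)) \<le> davenport G"
    using assms(2) by (metis Suc_n_not_le_n enat_ord_simps(1) order_trans size_add_mset)
  then have "add_mset t S \<notin> atoms G"
    using size_le_davenport by blast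
  with t obtain A B where AB: "A \<in> prod_one_seqs G" "B \<in> prod_one_seqs G"
    "add_mset t S = A + B" "A \<noteq> {#}" "B \<noteq> {#}"
    by (auto simp: atoms_def)
  have "t \<in># A \<or> t \<in># B"
    using AB(3) by (metis union_iff union_single_eq_member)
  then show thesis
  proof
    assume "t \<in># A"
    then obtain A' where "A = add_mset t A'"
      by (metis multi_member_split)
    with AB(3) have "S = A' + B"
      by simp
    with AB show thesis
      by (intro that[of B]) auto
  next
    assume "t \<in># B"
    then obtain B' where "B = add_mset t B'"
      by (metis multi_member_split)
    with AB(3) have "S = A + B'"
      by simp
    with AB show thesis
      by (intro that[of A]) auto
  qed
qed

end

lemma hom_list_prod:
  assumes "group G" "group H" "\<phi> \<in> hom G H" "set xs \<subseteq> carrier G"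
  shows "\<phi> (list_prod G xs) = list_prod H (map \<phi> xs)"
  using assms(4)
proof (induction xs)
  case (Cons x xs)
  then show ?case
    using assms(3) group.list_prod_closed[OF assms(1)] by (simp add: hom_mult)
qed (simp add: hom_one[OF assms(3,1,2)])

lemma prod_one_seqs_image_hom:
  assumes "group G" "group H" "\<phi> \<in> hom G H" "S \<in> prod_one_seqs G"
  shows "image_mset \<phi> S \<in> prod_one_seqs H"
proof -
  obtain xs where xs: "mset xs = S" "list_prod G xs = \<one>\<^bsub>G\<^esub>" "set xs \<subseteq> carrier G"
    using assms(4) by (auto simp: prod_one_seqs_iff)
  then have "list_prod H (map \<phi> xs) = \<one>\<^bsub>H\<^esub>"
    using hom_list_prod[OF assms(1-3)] hom_one[OF assms(3,1,2)] by metis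
  with xs assms(3) show ?thesis
    by (auto simp: prod_one_seqs_iff hom_def intro!: exI[of _ "map \<phi> xs"])
qed

lemma prod_one_seqs_of_image_inj:
  assumes "group G" "group H" "\<phi> \<in> hom G H" "inj_on \<phi> (carrier G)"
    and S: "set_mset S \<subseteq> carrier G" "image_mset \<phi> S \<in> prod_one_seqs H"
  shows "S \<in> prod_one_seqs G"
proof -
  obtain ys where ys: "mset ys = image_mset \<phi> S" "list_prod H ys = \<one>\<^bsub>H\<^esub>"
    using S(2) by (auto simp: prod_one_seqs_iff)
  define xs where "xs = map (inv_into (carrier G) \<phi>) ys"
  have ys_image: "set ys \<subseteq> \<phi> ` carrier G"
    using S(1) arg_cong[OF ys(1), of set_mset] by auto
  then have xs_carr: "set xs \<subseteq> carrier G" and "map \<phi> xs = ys"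
    by (auto simp: xs_def f_inv_into_f intro!: map_idI inv_into_into)
  then have "\<phi> (list_prod G xs) = \<phi> \<one>\<^bsub>G\<^esub>"
    using ys(2) hom_list_prod[OF assms(1-3)] hom_one[OF assms(3,1,2)] by metis
  then have "list_prod G xs = \<one>\<^bsub>G\<^esub>"
    using assms(4) xs_carr group.list_prod_closed[OF assms(1)] monoid.one_closed[of G] assms(1)
    by (meson group.is_monoid inj_onD)
  moreover have "mset xs = S"
  proof -
    have "mset xs = image_mset (inv_into (carrier G) \<phi> \<circ> \<phi>) S"
      by (simp add: xs_def ys(1) image_mset.compositionality)
    also have "\<dots> = image_mset id S"
      using S(1) assms(4) by (intro image_mset_cong) auto
    finally show ?thesis by simp
  qed
  ultimately show ?thesis
    using S(1) by (auto simp: prod_one_seqs_iff)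
qed

lemma davenport_le_of_iso:
  assumes "group G" "group H" "\<phi> \<in> iso G H"
  shows "davenport G \<le> davenport H"
  unfolding davenport_def
proof (rule SUP_least)
  fix U assume U: "U \<in> atoms G"
  have hom: "\<phi> \<in> hom G H" and inj: "inj_on \<phi> (carrier G)"
    using assms(3) by (auto simp: iso_def bij_betw_def)
  have U_carr: "set_mset U \<subseteq> carrier G"
    using atomsD(1)[OF U] by (simp add: prod_one_seqs_iff)
  have "image_mset \<phi> U \<in> atoms H"
    unfolding atoms_def
  proof (intro CollectI conjI ballI impI)
    show "image_mset \<phi> U \<in> prod_one_seqs H"
      using prod_one_seqs_image_hom[OF assms(1,2) hom atomsD(1)[OF U]] .
    show "image_mset \<phi> U \<noteq> {#}"
      using atomsD(2)[OF U] by simp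
    fix A B assume A: "A \<in> prod_one_seqs H" and B: "B \<in> prod_one_seqs H"
      and "image_mset \<phi> U = A + B"
    then obtain A' B' where U_eq: "U = A' + B'" and "A = image_mset \<phi> A'" "B = image_mset \<phi> B'"
      by (auto dest: image_mset_eq_plusD)
    moreover have "A' \<in> prod_one_seqs G" "B' \<in> prod_one_seqs G"
      using A B U_carr U_eq calculation
      by (auto intro!: prod_one_seqs_of_image_inj[OF assms(1,2) hom inj])
    ultimately show "A = {#} \<or> B = {#}"
      using atomsD(3)[OF U] by auto
  qed
  from SUP_upper[OF this, of "\<lambda>V. enat (size V)"] show "enat (size U) \<le> (SUP V\<in>atoms H. enat (size V))"
    by simp
qed

context comm_group
begin

lemma list_prod_remove1:
  "x \<in> set ys \<Longrightarrow> set ys \<subseteq> carrier G \<Longrightarrow> list_prod G ys = x \<otimes> list_prod G (remove1 x ys)"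
proof (induction ys)
  case (Cons y ys)
  show ?case
  proof (cases "x = y")
    case False
    with Cons have "list_prod G (y # ys) = y \<otimes> (x \<otimes> list_prod G (remove1 x ys))"
      by auto
    also have "\<dots> = x \<otimes> (y \<otimes> list_prod G (remove1 x ys))"
      using Cons.prems set_remove1_subset[of x ys] by (intro m_lcomm) auto
    finally show ?thesis
      using False by simp
  qed simp
qed simp

lemma list_prod_perm:
  "mset xs = mset ys \<Longrightarrow> set xs \<subseteq> carrier G \<Longrightarrow> list_prod G xs = list_prod G ys"
proof (induction xs arbitrary: ys)
  case (Cons x xs)
  then have "x \<in> set ys" "set ys \<subseteq> carrier G"
    by (metis list.set_intros(1) set_mset_mset, metis set_mset_mset)
  moreover have "list_prod G xs = list_prod G (remove1 x ys)"
    using Cons by (intro Cons.IH) (simp_all flip: Cons.prems(1))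
  ultimately show ?case
    using list_prod_remove1 by simp
qed simp

lemma prod_one_seqs_iff_list_prod:
  assumes "mset xs = S" "set xs \<subseteq> carrier G"
  shows "S \<in> prod_one_seqs G \<longleftrightarrow> list_prod G xs = \<one>"
proof
  assume "S \<in> prod_one_seqs G"
  then obtain ys where "mset ys = S" "list_prod G ys = \<one>"
    by (auto simp: prod_one_seqs_iff)
  with assms show "list_prod G xs = \<one>"
    using list_prod_perm[of ys xs] by (metis set_mset_mset)
qed (use assms in \<open>auto simp: prod_one_seqs_iff\<close>)

lemma prod_one_seqs_cancel:
  assumes "S \<in> prod_one_seqs G" "S + T \<in> prod_one_seqs G"
  shows "T \<in> prod_one_seqs G"
proof -
  obtain xs ys where xs: "mset xs = S" and ys: "mset ys = T"
    using ex_mset by metis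
  moreover have "set xs \<subseteq> carrier G" "set ys \<subseteq> carrier G"
    using assms(2) xs ys by (auto simp: prod_one_seqs_iff)
  ultimately show ?thesis
    using assms prod_one_seqs_iff_list_prod[of "xs @ ys" "S + T"] prod_one_seqs_iff_list_prod[of xs S]
      prod_one_seqs_iff_list_prod[of ys T]
    by (simp add: list_prod_append)
qed

lemma atom_no_proper_prod_one_subseq:
  assumes "V \<in> atoms G" "C \<subseteq># V" "C \<in> prod_one_seqs G" "C \<noteq> {#}"
  shows "C = V"
proof -
  have "C + (V - C) \<in> prod_one_seqs G"
    using assms(1,2) atomsD(1) by (simp add: subset_mset.add_diff_inverse)
  then have "V - C \<in> prod_one_seqs G"
    using assms(3) prod_one_seqs_cancel by blast
  then have "V - C = {#}"
    using atomsD(3)[OF assms(1) assms(3)] assms(2,4) by (simp add: subset_mset.add_diff_inverse)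
  with assms(2) show ?thesis
    by (metis subset_mset.add_diff_inverse add.right_neutral)
qed

end

section \<open>The class semigroup\<close>

lemma seq_equiv_refl: "seq_equiv G S S"
  by (simp add: seq_equiv_def)

lemma seq_equiv_sym: "seq_equiv G S S' \<Longrightarrow> seq_equiv G S' S"
  by (simp add: seq_equiv_def)

lemma seq_equiv_add:
  assumes "seq_equiv G S S'" "seq_equiv G T T'" "S' \<in> seqs G" "T \<in> seqs G"
  shows "seq_equiv G (S + T) (S' + T')"
  unfolding seq_equiv_def
proof
  fix Y assume Y: "Y \<in> seqs G"
  have "S + T + Y \<in> prod_one_seqs G \<longleftrightarrow> S' + (T + Y) \<in> prod_one_seqs G"
    using assms(1,4) Y unfolding seq_equiv_def by (simp add: add.assoc)
  also have "\<dots> \<longleftrightarrow> T + (S' + Y) \<in> prod_one_seqs G"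
    by (simp add: add_ac)
  also have "\<dots> \<longleftrightarrow> T' + (S' + Y) \<in> prod_one_seqs G"
    using assms(2,3) Y unfolding seq_equiv_def by simp
  finally show "S + T + Y \<in> prod_one_seqs G \<longleftrightarrow> S' + T' + Y \<in> prod_one_seqs G"
    by (simp add: add_ac)
qed

lemma seq_equiv_sum:
  assumes "\<And>i. i \<in> I \<Longrightarrow> seq_equiv G (f i) (g i) \<and> f i \<in> seqs G \<and> g i \<in> seqs G"
  shows "seq_equiv G (\<Sum>i\<in>I. f i) (\<Sum>i\<in>I. g i)"
  using assms
proof (induction I rule: infinite_finite_induct)
  case (insert a I)
  then show ?case
    by (simp add: seq_equiv_add seqs_sum)
qed (simp_all add: seq_equiv_refl)

lemma seq_equiv_prod_one_seqs:
  assumes "seq_equiv G S S'"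
  shows "S \<in> prod_one_seqs G \<longleftrightarrow> S' \<in> prod_one_seqs G"
proof -
  have "{#} \<in> seqs G"
    by (simp add: seqs_def)
  with assms have "S + {#} \<in> prod_one_seqs G \<longleftrightarrow> S' + {#} \<in> prod_one_seqs G"
    unfolding seq_equiv_def by blast
  then show ?thesis
    by simp
qed

lemma seq_class_eq_iff:
  assumes "S \<in> seqs G" "S' \<in> seqs G"
  shows "seq_class G S = seq_class G S' \<longleftrightarrow> seq_equiv G S S'"
  using assms by (auto simp: seq_class_def seq_equiv_def set_eq_iff)

lemma class_add_seq_class:
  assumes "S \<in> seqs G" "T \<in> seqs G"
  shows "class_add G (seq_class G S) (seq_class G T) = seq_class G (S + T)"
proof -
  define s where "s = (SOME s. s \<in> seq_class G S)"
  define t where "t = (SOME t. t \<in> seq_class G T)"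
  have "S \<in> seq_class G S" "T \<in> seq_class G T"
    using assms by (auto simp: seq_class_def seq_equiv_refl)
  then have "s \<in> seq_class G S" "t \<in> seq_class G T"
    unfolding s_def t_def by (auto intro: someI)
  then have st: "s \<in> seqs G" "t \<in> seqs G" "seq_equiv G s S" "seq_equiv G t T"
    by (auto simp: seq_class_def seq_equiv_sym)
  then have "seq_equiv G (s + t) (S + T)"
    using assms by (intro seq_equiv_add)
  with assms st show ?thesis
    by (simp add: class_add_def s_def[symmetric] t_def[symmetric] seq_class_eq_iff)
qed

lemma gsum_map_seq_class:
  assumes "\<And>x. x \<in> set xs \<Longrightarrow> f x \<in> seqs G"
  shows "gsum (class_add G) (class_zero G) (map (\<lambda>x. seq_class G (f x)) xs)
    = seq_class G (sum_list (map f xs))"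
  using assms
proof (induction xs)
  case (Cons x xs)
  have "sum_list (map f xs) \<in> seqs G"
    using Cons.prems by (induction xs) (auto simp: seqs_def)
  with Cons show ?case
    by (simp add: gsum_def class_add_seq_class)
qed (simp add: gsum_def class_zero_def)

lemma gsum_eq_subsum_lessThan: "gsum p z cs = subsum p z cs {..<length cs}"
  by (simp add: subsum_def lessThan_atLeast0 map_nth)

lemma subsum_map_seq_class:
  assumes "\<And>i. i \<in> \<Lambda> \<Longrightarrow> f i \<in> seqs G" "\<Lambda> \<subseteq> {..<n}"
  shows "subsum (class_add G) (class_zero G) (map (\<lambda>i. seq_class G (f i)) [0..<n]) \<Lambda>
    = seq_class G (\<Sum>i\<in>\<Lambda>. f i)"
proof -
  have fin: "finite \<Lambda>"
    using assms(2) finite_subset by blast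
  have map_eq: "map ((!) (map (\<lambda>i. seq_class G (f i)) [0..<n])) (sorted_list_of_set \<Lambda>)
      = map (\<lambda>i. seq_class G (f i)) (sorted_list_of_set \<Lambda>)"
    using assms(2) fin by (intro map_cong) auto
  have "subsum (class_add G) (class_zero G) (map (\<lambda>i. seq_class G (f i)) [0..<n]) \<Lambda>
      = gsum (class_add G) (class_zero G) (map (\<lambda>i. seq_class G (f i)) (sorted_list_of_set \<Lambda>))"
    unfolding subsum_def map_eq ..
  also have "\<dots> = seq_class G (sum_list (map f (sorted_list_of_set \<Lambda>)))"
    using assms fin by (intro gsum_map_seq_class) auto
  also have "sum_list (map f (sorted_list_of_set \<Lambda>)) = (\<Sum>i\<in>\<Lambda>. f i)"
    using fin by (simp add: sum_list_distinct_conv_sum_set)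
  finally show ?thesis .
qed

lemma gsum_eq_subsum_seq_class_iff:
  assumes "\<And>i. i < n \<Longrightarrow> f i \<in> seqs G" "\<Lambda> \<subseteq> {..<n}"
  shows "gsum (class_add G) (class_zero G) (map (\<lambda>i. seq_class G (f i)) [0..<n])
      = subsum (class_add G) (class_zero G) (map (\<lambda>i. seq_class G (f i)) [0..<n]) \<Lambda>
    \<longleftrightarrow> seq_equiv G (\<Sum>i<n. f i) (\<Sum>i\<in>\<Lambda>. f i)"
proof -
  let ?cs = "map (\<lambda>i. seq_class G (f i)) [0..<n]"
  have "gsum (class_add G) (class_zero G) ?cs = seq_class G (\<Sum>i<n. f i)"
    using assms(1) subsum_map_seq_class[of "{..<n}" f G n]
    by (simp add: gsum_eq_subsum_lessThan[of _ _ ?cs])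
  moreover have "subsum (class_add G) (class_zero G) ?cs \<Lambda> = seq_class G (\<Sum>i\<in>\<Lambda>. f i)"
    using assms by (intro subsum_map_seq_class) auto
  moreover have "(\<Sum>i<n. f i) \<in> seqs G" "(\<Sum>i\<in>\<Lambda>. f i) \<in> seqs G"
    using assms by (auto intro!: seqs_sum)
  ultimately show ?thesis
    by (simp add: seq_class_eq_iff)
qed

lemma class_list_representatives:
  assumes "set cs \<subseteq> class_sg G"
  obtains f where "\<And>i. i < length cs \<Longrightarrow> f i \<in> seqs G"
    "cs = map (\<lambda>i. seq_class G (f i)) [0..<length cs]"
proof -
  have "\<forall>i<length cs. \<exists>S. S \<in> seqs G \<and> cs ! i = seq_class G S"
  proof (intro allI impI)
    fix i assume "i < length cs"
    then have "cs ! i \<in> class_sg G"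
      using assms nth_mem by blast
    then show "\<exists>S. S \<in> seqs G \<and> cs ! i = seq_class G S"
      by (auto simp: class_sg_def)
  qed
  then obtain f where "\<forall>i<length cs. f i \<in> seqs G \<and> cs ! i = seq_class G (f i)"
    by metis
  then show thesis
    by (intro that) (auto intro: nth_equalityI)
qed

lemma small_dav_attained:
  assumes "small_dav C p z \<noteq> \<infinity>" "set cs \<subseteq> C"
  shows "\<exists>\<Omega>\<subseteq>{..<length cs}. enat (card \<Omega>) \<le> small_dav C p z \<and> gsum p z cs = subsum p z cs \<Omega>"
proof -
  let ?D = "{d. \<forall>cs. set cs \<subseteq> C \<longrightarrow>
      (\<exists>\<Omega>\<subseteq>{..<length cs}. enat (card \<Omega>) \<le> d \<and> gsum p z cs = subsum p z cs \<Omega>)}"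
  have "?D \<noteq> {}"
  proof
    assume "?D = {}"
    then show False
      using assms(1) by (simp add: small_dav_def Inf_enat_def)
  qed
  then have "Inf ?D \<in> ?D"
    by (meson ex_in_conv wellorder_InfI)
  with assms(2) show ?thesis
    by (simp add: small_dav_def)
qed

lemma large_dav_le:
  assumes "1 \<le> l"
    and "\<And>cs. set cs \<subseteq> C \<Longrightarrow> l \<le> enat (length cs) \<Longrightarrow>
      \<exists>\<Omega>\<subset>{..<length cs}. gsum p z cs = subsum p z cs \<Omega>"
  shows "large_dav C p z \<le> l"
  unfolding large_dav_def using assms by (intro Inf_lower) auto

lemma large_dav_ge:
  assumes "set cs \<subseteq> C" "\<nexists>\<Omega>. \<Omega> \<subset> {..<length cs} \<and> gsum p z cs = subsum p z cs \<Omega>"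
  shows "enat (Suc (length cs)) \<le> large_dav C p z"
  unfolding large_dav_def
proof (rule Inf_greatest, clarify)
  fix l :: enat
  assume "\<forall>cs. set cs \<subseteq> C \<and> l \<le> enat (length cs) \<longrightarrow>
      (\<exists>\<Omega>\<subset>{..<length cs}. gsum p z cs = subsum p z cs \<Omega>)"
  with assms have "\<not> l \<le> enat (length cs)"
    by blast
  then show "enat (Suc (length cs)) \<le> l"
    by (cases l) auto
qed

context comm_group
begin

lemma seq_equiv_add_prod_one:
  assumes "T \<in> prod_one_seqs G"
  shows "seq_equiv G (S + T) S"
  unfolding seq_equiv_def
proof (intro ballI iffI)
  fix Y assume "S + T + Y \<in> prod_one_seqs G"
  then have "T + (S + Y) \<in> prod_one_seqs G"
    by (simp add: add_ac)
  then show "S + Y \<in> prod_one_seqs G"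
    using assms prod_one_seqs_cancel by blast
next
  fix Y assume "S + Y \<in> prod_one_seqs G"
  then have "T + (S + Y) \<in> prod_one_seqs G"
    using assms prod_one_seqs_add by blast
  then show "S + T + Y \<in> prod_one_seqs G"
    by (simp add: add_ac)
qed

lemma seq_equiv_singleton:
  assumes "S \<in> seqs G"
  obtains \<sigma> where "\<sigma> \<in> carrier G" "seq_equiv G S {#\<sigma>#}"
proof -
  obtain xs where xs: "mset xs = S" "set xs \<subseteq> carrier G"
    using assms by (metis ex_mset seqs_iff set_mset_mset)
  have "seq_equiv G S {#list_prod G xs#}"
    unfolding seq_equiv_def
  proof
    fix T assume "T \<in> seqs G"
    then obtain ys where ys: "mset ys = T" "set ys \<subseteq> carrier G"
      by (metis ex_mset seqs_iff set_mset_mset)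
    have "S + T \<in> prod_one_seqs G \<longleftrightarrow> list_prod G (xs @ ys) = \<one>"
      using xs ys by (intro prod_one_seqs_iff_list_prod) auto
    also have "\<dots> \<longleftrightarrow> list_prod G (list_prod G xs # ys) = \<one>"
      using xs ys by (simp add: list_prod_append)
    also have "\<dots> \<longleftrightarrow> {#list_prod G xs#} + T \<in> prod_one_seqs G"
      using xs ys by (intro prod_one_seqs_iff_list_prod[symmetric]) auto
    finally show "S + T \<in> prod_one_seqs G \<longleftrightarrow> {#list_prod G xs#} + T \<in> prod_one_seqs G" .
  qed
  with xs show thesis
    by (intro that) auto
qed

end

section \<open>Bounds for \<open>\<omega>(G)\<close>\<close>

context group
begin

lemma atom_neq_double:
  assumes u: "u \<in> atoms G" and R: "set_mset R \<subseteq> carrier G" "2 \<le> size R"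
  shows "u \<noteq> R + image_mset (\<lambda>x. inv x) R"
proof
  assume u_eq: "u = R + image_mset (\<lambda>x. inv x) R"
  obtain r R' where R_eq: "R = add_mset r R'"
    using R(2) by (cases R) auto
  with R(2) have "R' \<noteq> {#}" by auto
  moreover have "u = {#r, inv r#} + (R' + image_mset (\<lambda>x. inv x) R')"
    using u_eq R_eq by simp
  ultimately show False
    using atomsD(3)[OF u prod_one_seqs_pair prod_one_seqs_double] R(1) R_eq by auto
qed

text \<open>The cofactor \<open>c\<close> of \<open>u\<close> in \<open>A A\<^sup>-\<^sup>1\<close> satisfies \<open>A = R\<^sup>-\<^sup>1 c\<^sup>-\<^sup>1\<close>, hence
  \<open>u = (R R\<^sup>-\<^sup>1) c\<^sup>-\<^sup>1\<close>, and atomicity would force \<open>u = R R\<^sup>-\<^sup>1\<close>.\<close>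
lemma atom_dvd_double:
  assumes u: "u \<in> atoms G" "3 \<le> size u" and u_eq: "u = A + R"
    and dvd: "bdvd G u (A + image_mset (\<lambda>x. inv x) A)"
  shows "R = {#}"
proof (rule ccontr)
  assume "R \<noteq> {#}"
  obtain c where c: "c \<in> prod_one_seqs G" "A + image_mset (\<lambda>x. inv x) A = u + c"
    using dvd by (auto simp: bdvd_def)
  have carr: "set_mset A \<subseteq> carrier G" "set_mset R \<subseteq> carrier G" "set_mset c \<subseteq> carrier G"
    using atomsD(1)[OF u(1)] c(1) u_eq by (auto simp: prod_one_seqs_iff)
  have "image_mset (\<lambda>x. inv x) A = R + c"
    using c(2) u_eq by (simp add: add.assoc)
  then have "A = image_mset (\<lambda>x. inv x) R + image_mset (\<lambda>x. inv x) c"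
    using image_mset_inv_inv[OF carr(1)] by (metis image_mset_union)
  then have u_split: "u = (R + image_mset (\<lambda>x. inv x) R) + image_mset (\<lambda>x. inv x) c"
    using u_eq by (simp add: add_ac)
  with atomsD(3)[OF u(1) prod_one_seqs_double prod_one_seqs_image_inv] carr \<open>R \<noteq> {#}\<close> c(1)
  have u_double: "u = R + image_mset (\<lambda>x. inv x) R" by auto
  then have "2 \<le> size R"
    using u(2) by simp
  with u_double show False
    using atom_neq_double[OF u(1) carr(2)] by blast
qed

lemma size_le_omega_elem:
  assumes u: "u \<in> atoms G" "3 \<le> size u"
  shows "enat (size u) \<le> omega_elem G u"
proof -
  obtain xs where xs: "mset xs = u" and carr: "set xs \<subseteq> carrier G"
    using atomsD(1)[OF u(1)] by (auto simp: prod_one_seqs_iff)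
  define n where "n = length xs"
  define as where "as = map (\<lambda>x. {#x, inv x#}) xs"
  have as_B: "set as \<subseteq> prod_one_seqs G"
    using carr by (auto simp: as_def intro!: prod_one_seqs_pair)
  have "sum_list as = u + image_mset (\<lambda>x. inv x) u"
    unfolding as_def xs[symmetric] by (induction xs) auto
  then have as_dvd: "bdvd G u (sum_list as)"
    using prod_one_seqs_image_inv[OF atomsD(1)[OF u(1)]] by (auto simp: bdvd_def)
  show ?thesis
    unfolding omega_elem_def
  proof (rule Inf_greatest, clarify)
    fix N :: enat
    assume "\<forall>as. set as \<subseteq> prod_one_seqs G \<and> bdvd G u (sum_list as) \<longrightarrow>
      (\<exists>\<Omega>\<subseteq>{..<length as}. enat (card \<Omega>) \<le> N \<and> bdvd G u (\<Sum>i\<in>\<Omega>. as ! i))"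
    then have "\<exists>\<Omega>\<subseteq>{..<length as}. enat (card \<Omega>) \<le> N \<and> bdvd G u (\<Sum>i\<in>\<Omega>. as ! i)"
      using as_B as_dvd by blast
    then obtain \<Omega> where \<Omega>: "\<Omega> \<subseteq> {..<n}" "enat (card \<Omega>) \<le> N"
      and \<Omega>_dvd: "bdvd G u (\<Sum>i\<in>\<Omega>. as ! i)"
      by (auto simp: n_def as_def)
    define A where "A = (\<Sum>i\<in>\<Omega>. {#xs ! i#})"
    define R where "R = (\<Sum>i\<in>{..<n} - \<Omega>. {#xs ! i#})"
    have u_eq: "u = A + R"
      using mset_eq_sum_nth[of xs] sum.subset_diff[OF \<Omega>(1), of "\<lambda>i. {#xs ! i#}"]
      by (simp add: A_def R_def n_def xs add.commute)
    have "(\<Sum>i\<in>\<Omega>. as ! i) = (\<Sum>i\<in>\<Omega>. {#xs ! i#} + {#inv (xs ! i)#})"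
      using \<Omega>(1) by (intro sum.cong) (auto simp: as_def n_def)
    also have "\<dots> = A + image_mset (\<lambda>x. inv x) A"
      by (simp only: A_def image_mset_sum image_mset_single sum.distrib)
    finally have "R = {#}"
      using atom_dvd_double[OF u u_eq] \<Omega>_dvd by simp
    then have "size R = 0"
      by simp
    then have "card ({..<n} - \<Omega>) = 0"
      by (simp add: R_def)
    then have "\<Omega> = {..<n}"
      using \<Omega>(1) by auto
    then show "enat (size u) \<le> N"
      using \<Omega>(2) xs by (auto simp: n_def)
  qed
qed

lemma atom_of_three:
  assumes g: "g \<in> carrier G" "g \<noteq> \<one>" and h: "h \<in> carrier G" "h \<noteq> \<one>"
    and gh: "g \<otimes> h \<noteq> \<one>"
  shows "{#g, h, inv (g \<otimes> h)#} \<in> atoms G"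
proof -
  let ?u = "{#g, h, inv (g \<otimes> h)#}"
  have "list_prod G [g, h, inv (g \<otimes> h)] = \<one>"
    using g h by (simp add: m_assoc[symmetric])
  then have u_B: "?u \<in> prod_one_seqs G"
    using g h unfolding prod_one_seqs_iff by (intro conjI exI[of _ "[g, h, inv (g \<otimes> h)]"]) auto
  have "A = {#} \<or> B = {#}"
    if AB: "A \<in> prod_one_seqs G" "B \<in> prod_one_seqs G" "?u = A + B" for A B
  proof (rule ccontr)
    assume "\<not> (A = {#} \<or> B = {#})"
    then have "size A \<noteq> 0" "size B \<noteq> 0"
      by auto
    moreover have "size A + size B = 3"
      using arg_cong[OF AB(3), of size] by simp
    ultimately have "size A = 1 \<or> size B = 1"
      by linarith
    then obtain x where "{#x#} \<subseteq># ?u" "{#x#} \<in> prod_one_seqs G"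
      using AB by (metis mset_subset_eq_add_left mset_subset_eq_add_right size_1_singleton_mset)
    then have "x \<in># ?u" "x = \<one>"
      by (auto simp: prod_one_seqs_iff)
    moreover have "inv (g \<otimes> h) \<noteq> \<one>"
      using g(1) h(1) gh by simp
    ultimately show False
      using g h by auto
  qed
  with u_B show ?thesis
    by (auto simp: atoms_def)
qed

lemma exists_atom_size_3:
  assumes "finite (carrier G)" "3 \<le> card (carrier G)"
  obtains u where "u \<in> atoms G" "size u = 3"
proof -
  have "\<not> carrier G \<subseteq> {\<one>}"
    using assms card_mono[of "{\<one>}" "carrier G"] by auto
  then obtain g where g: "g \<in> carrier G" "g \<noteq> \<one>" by auto
  have "card {\<one>, inv g} \<le> 2"
    by (simp add: card_insert_if)
  then have "\<not> carrier G \<subseteq> {\<one>, inv g}"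
    using assms card_mono[of "{\<one>, inv g}" "carrier G"] by auto
  then obtain h where h: "h \<in> carrier G" "h \<noteq> \<one>" "h \<noteq> inv g" by auto
  have "g \<otimes> h \<noteq> \<one>"
  proof
    assume "g \<otimes> h = \<one>"
    then have "inv g = h"
      using g h by (metis inv_comm inv_equality)
    with h show False by simp
  qed
  moreover have "size {#g, h, inv (g \<otimes> h)#} = 3"
    by simp
  ultimately show thesis
    using atom_of_three[OF g h(1,2)] that by blast
qed

lemma davenport_le_omega_grp:
  assumes "finite (carrier G)" "3 \<le> card (carrier G)"
  shows "davenport G \<le> omega_grp G"
proof -
  have omega_ge: "enat (size u) \<le> omega_grp G" if "u \<in> atoms G" "3 \<le> size u" for u
    using size_le_omega_elem[OF that] SUP_upper[OF that(1), of "omega_elem G"]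
    unfolding omega_grp_def by (rule order_trans)
  obtain u3 where "u3 \<in> atoms G" "size u3 = 3"
    using exists_atom_size_3[OF assms] .
  with omega_ge have three: "3 \<le> omega_grp G"
    by (metis eval_nat_numeral(3) order.refl numeral_eq_enat)
  show ?thesis
    unfolding davenport_def
  proof (rule SUP_least)
    fix U assume "U \<in> atoms G"
    show "enat (size U) \<le> omega_grp G"
    proof (cases "3 \<le> size U")
      case False
      then have "enat (size U) \<le> 3"
        by (simp add: numeral_eq_enat)
      from this three show ?thesis by (rule order_trans)
    qed (use omega_ge \<open>U \<in> atoms G\<close> in auto)
  qed
qed

end

lemma exists_small_subfamily_prod_one:
  fixes n :: nat
  assumes "small_dav (class_sg G) (class_add G) (class_zero G) \<noteq> \<infinity>"
    and g: "\<And>i. i < n \<Longrightarrow> g i \<in> seqs G" and W: "W \<in> seqs G"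
    and prod_one: "(\<Sum>i<n. g i) + W \<in> prod_one_seqs G"
  obtains \<Lambda> where "\<Lambda> \<subseteq> {..<n}" "enat (card \<Lambda>) \<le> small_dav (class_sg G) (class_add G) (class_zero G)"
    "(\<Sum>i\<in>\<Lambda>. g i) + W \<in> prod_one_seqs G"
proof -
  let ?cs = "map (\<lambda>i. seq_class G (g i)) [0..<n]"
  have classes: "set ?cs \<subseteq> class_sg G"
    using g by (auto simp: class_sg_def)
  obtain \<Lambda> where \<Lambda>: "\<Lambda> \<subseteq> {..<n}"
    "enat (card \<Lambda>) \<le> small_dav (class_sg G) (class_add G) (class_zero G)"
    and "gsum (class_add G) (class_zero G) ?cs = subsum (class_add G) (class_zero G) ?cs \<Lambda>"
    using small_dav_attained[OF assms(1) classes, unfolded length_map length_upt diff_zero] by blast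
  then have "seq_equiv G (\<Sum>i<n. g i) (\<Sum>i\<in>\<Lambda>. g i)"
    by (simp only: gsum_eq_subsum_seq_class_iff[OF g \<Lambda>(1)])
  with prod_one W have "(\<Sum>i\<in>\<Lambda>. g i) + W \<in> prod_one_seqs G"
    by (simp add: seq_equiv_def)
  with \<Lambda> show thesis
    by (rule that)
qed

text \<open>The factors covering \<open>b\<close> are replaced by empty sequences, keeping all positions, and
  the small Davenport constant is applied to the classes of the resulting family.\<close>
lemma omega_elem_le_size_plus_small_dav:
  "omega_elem G b \<le> enat (size b) + small_dav (class_sg G) (class_add G) (class_zero G)"
proof (cases "small_dav (class_sg G) (class_add G) (class_zero G) = \<infinity>")
  case False
  let ?d = "small_dav (class_sg G) (class_add G) (class_zero G)"
  show ?thesis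
    unfolding omega_elem_def
  proof (rule Inf_lower, clarify)
    fix as assume as_B: "set as \<subseteq> prod_one_seqs G" and "bdvd G b (sum_list as)"
    define n where "n = length as"
    obtain c where c: "c \<in> prod_one_seqs G" "(\<Sum>i<n. as ! i) = b + c"
      using \<open>bdvd G b (sum_list as)\<close>
      by (auto simp: bdvd_def n_def sum_list_sum_nth atLeast0LessThan)
    have as_seqs: "as ! i \<in> seqs G" if "i < n" for i
      using as_B that by (intro prod_one_seqs_in_seqs) (auto simp: n_def)
    obtain \<Omega>\<^sub>1 where \<Omega>\<^sub>1: "\<Omega>\<^sub>1 \<subseteq> {..<n}" "card \<Omega>\<^sub>1 \<le> size b" "b \<subseteq># (\<Sum>i\<in>\<Omega>\<^sub>1. as ! i)"
      using subseteq_sum_small_cover[of "{..<n}" b "(!) as"] c(2) by auto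
    define W where "W = (\<Sum>i\<in>\<Omega>\<^sub>1. as ! i) - b"
    have W: "(\<Sum>i\<in>\<Omega>\<^sub>1. as ! i) = b + W"
      using \<Omega>\<^sub>1(3) by (simp add: W_def)
    have W_seqs: "W \<in> seqs G"
      using seqs_sum[of \<Omega>\<^sub>1 "(!) as" G] as_seqs \<Omega>\<^sub>1(1) W by (auto simp: seqs_def)
    define g where "g i = (if i \<in> \<Omega>\<^sub>1 then {#} else as ! i)" for i
    have g_seqs: "g i \<in> seqs G" if "i < n" for i
      using as_seqs that by (simp add: g_def seqs_def)
    have sum_g: "(\<Sum>i\<in>I. g i) = (\<Sum>i\<in>I - \<Omega>\<^sub>1. as ! i)" if "finite I" for I
      using that by (simp add: g_def sum.If_cases Diff_eq)
    have "(\<Sum>i<n. as ! i) = b + W + (\<Sum>i<n. g i)"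
      using sum.subset_diff[OF \<Omega>\<^sub>1(1), of "(!) as"] W sum_g[of "{..<n}"] by (simp add: add_ac)
    then have g_prod_one: "(\<Sum>i<n. g i) + W \<in> prod_one_seqs G"
      using c by (simp add: add_ac)
    obtain \<Lambda> where \<Lambda>: "\<Lambda> \<subseteq> {..<n}" "enat (card \<Lambda>) \<le> ?d"
      and cofactor: "(\<Sum>i\<in>\<Lambda>. g i) + W \<in> prod_one_seqs G"
      by (rule exists_small_subfamily_prod_one[OF False g_seqs W_seqs g_prod_one])
    have fin: "finite \<Omega>\<^sub>1" "finite \<Lambda>"
      using \<Omega>\<^sub>1(1) \<Lambda>(1) finite_subset by blast+
    define \<Omega> where "\<Omega> = \<Omega>\<^sub>1 \<union> \<Lambda>"
    have "(\<Sum>i\<in>\<Omega>. as ! i) = (\<Sum>i\<in>\<Omega>\<^sub>1. as ! i) + (\<Sum>i\<in>\<Lambda> - \<Omega>\<^sub>1. as ! i)"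
      using fin sum.union_disjoint[of \<Omega>\<^sub>1 "\<Lambda> - \<Omega>\<^sub>1" "(!) as"] by (simp add: \<Omega>_def)
    also have "\<dots> = b + ((\<Sum>i\<in>\<Lambda>. g i) + W)"
      using W sum_g[OF fin(2)] by (simp add: add_ac)
    finally have "bdvd G b (\<Sum>i\<in>\<Omega>. as ! i)"
      using cofactor by (auto simp: bdvd_def)
    moreover have "\<Omega> \<subseteq> {..<length as}"
      using \<Omega>\<^sub>1(1) \<Lambda>(1) by (auto simp: \<Omega>_def n_def)
    moreover have "enat (card \<Omega>) \<le> enat (size b) + ?d"
    proof -
      have "enat (card \<Omega>) \<le> enat (card \<Omega>\<^sub>1) + enat (card \<Lambda>)"
        by (simp add: \<Omega>_def card_Un_le)
      also have "\<dots> \<le> enat (size b) + ?d"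
        using \<Omega>\<^sub>1(2) \<Lambda>(2) by (intro add_mono) auto
      finally show ?thesis .
    qed
    ultimately show "\<exists>\<Omega>\<subseteq>{..<length as}. enat (card \<Omega>) \<le> enat (size b) + ?d \<and>
        bdvd G b (\<Sum>i\<in>\<Omega>. as ! i)"
      by blast
  qed
qed simp

lemma omega_grp_le_davenport_plus_small_dav:
  "omega_grp G \<le> davenport G + small_dav (class_sg G) (class_add G) (class_zero G)"
  unfolding omega_grp_def
proof (rule SUP_least)
  fix u assume "u \<in> atoms G"
  then show "omega_elem G u \<le> davenport G + small_dav (class_sg G) (class_add G) (class_zero G)"
    using omega_elem_le_size_plus_small_dav[of G u] size_le_davenport
    by (meson add_right_mono order_trans)
qed

section \<open>The large Davenport constant of the class semigroup\<close>

context group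
begin

text \<open>Complete \<open>S R\<close> by a term \<open>t\<close> to a product-one sequence; then \<open>S t\<close> is product-one
  as well, and in the commutative group \<open>H\<close> the image of \<open>S t\<close> cancels from that of \<open>S R t\<close>.\<close>
lemma image_prod_one_of_seq_equiv:
  assumes "comm_group H" "\<phi> \<in> hom G H"
    and "S \<in> seqs G" "R \<in> seqs G" "seq_equiv G (S + R) S"
  shows "image_mset \<phi> R \<in> prod_one_seqs H"
proof -
  interpret H: comm_group H by (rule assms(1))
  obtain t where t: "t \<in> carrier G" "add_mset t (S + R) \<in> prod_one_seqs G"
    using exists_prod_one_completion[of "S + R"] assms(3,4) by auto
  moreover have "{#t#} \<in> seqs G"
    using t by (simp add: seqs_def)
  ultimately have "S + {#t#} \<in> prod_one_seqs G"
    using assms(5) unfolding seq_equiv_def by (metis add_mset_add_single)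
  then have "image_mset \<phi> (S + {#t#}) \<in> prod_one_seqs H"
    by (rule prod_one_seqs_image_hom[OF is_group H.is_group assms(2)])
  moreover have "image_mset \<phi> (S + {#t#}) + image_mset \<phi> R \<in> prod_one_seqs H"
    using prod_one_seqs_image_hom[OF is_group H.is_group assms(2) t(2)] by (simp add: add_ac)
  ultimately show ?thesis
    by (rule H.prod_one_seqs_cancel)
qed

text \<open>A proper subfamily of the classes \<open>[g\<^sub>i]\<close> with the same sum would make the image of the
  complementary subfamily a nonempty product-one subsequence of \<open>\<phi>(g\<^sub>1) \<cdots> \<phi>(g\<^sub>m)\<close>,
  contradicting atomicity of \<open>\<phi>(g\<^sub>1) \<cdots> \<phi>(g\<^sub>m) v\<close>.\<close>
lemma no_proper_subsum_of_lifted_atom: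
  assumes "comm_group H" "\<phi> \<in> hom G H" and gs: "set gs \<subseteq> carrier G"
    and V: "add_mset v (mset (map \<phi> gs)) \<in> atoms H"
  defines "cs \<equiv> map (\<lambda>i. seq_class G {#gs ! i#}) [0..<length gs]"
  shows "\<nexists>\<Omega>. \<Omega> \<subset> {..<length cs} \<and>
    gsum (class_add G) (class_zero G) cs = subsum (class_add G) (class_zero G) cs \<Omega>"
proof
  interpret H: comm_group H by (rule assms(1))
  define m where "m = length gs"
  have gs_carr: "gs ! i \<in> carrier G" if "i < m" for i
    using that gs nth_mem[of i gs] by (auto simp: m_def)
  have sum_gs_seqs: "(\<Sum>i\<in>I. {#gs ! i#}) \<in> seqs G" if "I \<subseteq> {..<m}" for I
    using that gs_carr by (intro seqs_sum) (auto simp: seqs_def)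
  assume "\<exists>\<Omega>. \<Omega> \<subset> {..<length cs} \<and>
    gsum (class_add G) (class_zero G) cs = subsum (class_add G) (class_zero G) cs \<Omega>"
  then obtain \<Omega> where \<Omega>: "\<Omega> \<subset> {..<m}"
    "gsum (class_add G) (class_zero G) cs = subsum (class_add G) (class_zero G) cs \<Omega>"
    by (auto simp: cs_def m_def)
  define C where "C = (\<Sum>i\<in>{..<m} - \<Omega>. {#\<phi> (gs ! i)#})"
  have "(\<Sum>i<m. {#gs ! i#}) = (\<Sum>i\<in>\<Omega>. {#gs ! i#}) + (\<Sum>i\<in>{..<m} - \<Omega>. {#gs ! i#})"
    using \<Omega> sum.subset_diff[of \<Omega> "{..<m}"] by (auto simp: add.commute)
  moreover have "seq_equiv G (\<Sum>i<m. {#gs ! i#}) (\<Sum>i\<in>\<Omega>. {#gs ! i#})"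
    using \<Omega> gs_carr gsum_eq_subsum_seq_class_iff[of m "\<lambda>i. {#gs ! i#}" G \<Omega>]
    by (auto simp: cs_def m_def seqs_def)
  ultimately have "image_mset \<phi> (\<Sum>i\<in>{..<m} - \<Omega>. {#gs ! i#}) \<in> prod_one_seqs H"
    using \<Omega> sum_gs_seqs by (intro image_prod_one_of_seq_equiv[OF assms(1,2)]) auto
  then have C_B: "C \<in> prod_one_seqs H"
    by (simp add: C_def image_mset_sum)
  have "mset (map \<phi> gs) = C + (\<Sum>i\<in>\<Omega>. {#\<phi> (gs ! i)#})"
    using mset_eq_sum_nth[of "map \<phi> gs"] \<Omega> sum.subset_diff[of \<Omega> "{..<m}"]
    by (auto simp: C_def m_def)
  then have C_sub: "C \<subseteq># add_mset v (mset (map \<phi> gs))"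
    by simp
  have size_C: "size C = card ({..<m} - \<Omega>)"
    by (simp add: C_def)
  have "{..<m} - \<Omega> \<noteq> {}"
    using \<Omega> by blast
  then have C_ne: "C \<noteq> {#}"
    using size_C by auto
  have "size C \<le> m"
    using size_C card_mono[of "{..<m}" "{..<m} - \<Omega>"] by simp
  then have "C \<noteq> add_mset v (mset (map \<phi> gs))"
    by (auto simp: m_def)
  then show False
    using H.atom_no_proper_prod_one_subseq[OF V C_sub C_B C_ne] by blast
qed

lemma davenport_le_large_dav_of_hom:
  assumes "comm_group H" "\<phi> \<in> hom G H" "\<phi> ` carrier G = carrier H"
  shows "davenport H \<le> large_dav (class_sg G) (class_add G) (class_zero G)"
  unfolding davenport_def
proof (rule SUP_least)
  fix V assume V: "V \<in> atoms H"
  obtain vs where vs: "mset vs = V" "set vs \<subseteq> carrier H"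
    using atomsD(1)[OF V] by (auto simp: prod_one_seqs_iff)
  then obtain ws v where vs_eq: "vs = ws @ [v]"
    using atomsD(2)[OF V] by (cases vs rule: rev_cases) auto
  define gs where "gs = map (inv_into (carrier G) \<phi>) ws"
  have "set ws \<subseteq> \<phi> ` carrier G"
    using vs assms(3) by (auto simp: vs_eq)
  then have gs: "set gs \<subseteq> carrier G" "map \<phi> gs = ws"
    by (auto simp: gs_def inv_into_into f_inv_into_f intro!: map_idI)
  then have "add_mset v (mset (map \<phi> gs)) \<in> atoms H"
    using V vs by (simp add: vs_eq flip: vs(1))
  note no_subsum = no_proper_subsum_of_lifted_atom[OF assms(1,2) gs(1) this]
  have "{#gs ! i#} \<in> seqs G" if "i < length gs" for i
    using that gs(1) nth_mem[of i gs] by (auto simp: seqs_def)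
  then have "set (map (\<lambda>i. seq_class G {#gs ! i#}) [0..<length gs]) \<subseteq> class_sg G"
    by (auto simp: class_sg_def)
  from large_dav_ge[OF this no_subsum]
  have "enat (Suc (length gs)) \<le> large_dav (class_sg G) (class_add G) (class_zero G)"
    by simp
  then show "enat (size V) \<le> large_dav (class_sg G) (class_add G) (class_zero G)"
    using length_map[of \<phi> gs] by (simp add: gs(2) vs_eq flip: vs(1))
qed

end

context comm_group
begin

lemma exists_prod_one_subfamily:
  fixes n :: nat
  assumes f: "\<And>i. i < n \<Longrightarrow> f i \<in> seqs G" and n: "davenport G \<le> enat n"
  obtains \<Lambda> where "\<Lambda> \<subseteq> {..<n}" "\<Lambda> \<noteq> {}" "(\<Sum>i\<in>\<Lambda>. f i) \<in> prod_one_seqs G"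
proof -
  define \<sigma> where "\<sigma> i = (SOME s. s \<in> carrier G \<and> seq_equiv G (f i) {#s#})" for i
  have \<sigma>: "\<sigma> i \<in> carrier G \<and> seq_equiv G (f i) {#\<sigma> i#}" if i: "i < n" for i
  proof -
    obtain s where "s \<in> carrier G" "seq_equiv G (f i) {#s#}"
      using seq_equiv_singleton[OF f[OF i]] by blast
    then show ?thesis
      unfolding \<sigma>_def by (intro someI[of "\<lambda>s. s \<in> carrier G \<and> seq_equiv G (f i) {#s#}"]) blast
  qed
  have "(\<Sum>i<n. {#\<sigma> i#}) \<in> seqs G"
    using \<sigma> by (intro seqs_sum) (simp add: seqs_def)
  moreover have "davenport G \<le> enat (size (\<Sum>i<n. {#\<sigma> i#}))"
    using n by simp
  ultimately obtain T where T: "T \<subseteq># (\<Sum>i<n. {#\<sigma> i#})" "T \<noteq> {#}" "T \<in> prod_one_seqs G"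
    by (rule exists_prod_one_subseq)
  then obtain \<Lambda> where \<Lambda>: "\<Lambda> \<subseteq> {..<n}" "T = (\<Sum>i\<in>\<Lambda>. {#\<sigma> i#})"
    using sub_sum_singletons[of "{..<n}" T \<sigma>] by blast
  have "seq_equiv G (\<Sum>i\<in>\<Lambda>. f i) T"
    unfolding \<Lambda>(2) using \<Lambda>(1) f \<sigma> by (intro seq_equiv_sum) (auto simp: seqs_def)
  with T(3) have "(\<Sum>i\<in>\<Lambda>. f i) \<in> prod_one_seqs G"
    using seq_equiv_prod_one_seqs by blast
  moreover have "\<Lambda> \<noteq> {}"
    using \<Lambda>(2) T(2) by auto
  ultimately show thesis
    using \<Lambda>(1) that by blast
qed

lemma gsum_eq_subsum_drop_prod_one:
  fixes n :: nat
  assumes f: "\<And>i. i < n \<Longrightarrow> f i \<in> seqs G" and "\<Lambda> \<subseteq> {..<n}"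
    and "(\<Sum>i\<in>\<Lambda>. f i) \<in> prod_one_seqs G"
  shows "gsum (class_add G) (class_zero G) (map (\<lambda>i. seq_class G (f i)) [0..<n])
    = subsum (class_add G) (class_zero G) (map (\<lambda>i. seq_class G (f i)) [0..<n]) ({..<n} - \<Lambda>)"
proof -
  have "(\<Sum>i<n. f i) = (\<Sum>i\<in>{..<n} - \<Lambda>. f i) + (\<Sum>i\<in>\<Lambda>. f i)"
    using sum.subset_diff[OF assms(2), of f] by simp
  then have "seq_equiv G (\<Sum>i<n. f i) (\<Sum>i\<in>{..<n} - \<Lambda>. f i)"
    using seq_equiv_add_prod_one[OF assms(3), of "\<Sum>i\<in>{..<n} - \<Lambda>. f i"] by (simp only:)
  then show ?thesis
    by (simp only: gsum_eq_subsum_seq_class_iff[OF f Diff_subset])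
qed

lemma large_dav_le_davenport:
  "large_dav (class_sg G) (class_add G) (class_zero G) \<le> davenport G"
proof (cases "davenport G")
  case (enat M)
  have "1 \<le> davenport G"
    using size_le_davenport[OF one_atom] by (simp add: one_enat_def)
  then show ?thesis
    unfolding enat
  proof (rule large_dav_le)
    fix cs assume cs: "set cs \<subseteq> class_sg G" "enat M \<le> enat (length cs)"
    obtain f where f: "\<And>i. i < length cs \<Longrightarrow> f i \<in> seqs G"
      and cs_eq: "cs = map (\<lambda>i. seq_class G (f i)) [0..<length cs]"
      using class_list_representatives[OF cs(1)] by blast
    have "davenport G \<le> enat (length cs)"
      using cs(2) enat by simp
    from exists_prod_one_subfamily[OF f this]
    obtain \<Lambda> where \<Lambda>: "\<Lambda> \<subseteq> {..<length cs}" "\<Lambda> \<noteq> {}" "(\<Sum>i\<in>\<Lambda>. f i) \<in> prod_one_seqs G" .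
    then have "{..<length cs} - \<Lambda> \<subset> {..<length cs}"
      by blast
    moreover have "gsum (class_add G) (class_zero G) cs
        = subsum (class_add G) (class_zero G) cs ({..<length cs} - \<Lambda>)"
      using gsum_eq_subsum_drop_prod_one[OF f \<Lambda>(1,3)] by (simp flip: cs_eq)
    ultimately show "\<exists>\<Omega>\<subset>{..<length cs}. gsum (class_add G) (class_zero G) cs
        = subsum (class_add G) (class_zero G) cs \<Omega>"
      by blast
  qed
qed simp

lemma davenport_le_davenport_Mod_derived: "davenport G \<le> davenport (G Mod derived G (carrier G))"
proof -
  have "derived G (carrier G) = {\<one>}"
    by (simp add: derived_eq_singleton)
  moreover have "group (G Mod {\<one>})"
    using normal.factorgroup_is_group[OF one_is_normal] .
  moreover from this have "inv_into (carrier (G Mod {\<one>})) the_elem \<in> iso G (G Mod {\<one>})"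
    by (rule group.iso_set_sym[OF _ trivial_factor_iso])
  ultimately show ?thesis
    using davenport_le_of_iso[OF is_group] by simp
qed

end

theorem proposition5p12:
  fixes G :: "('a, 'b) monoid_scheme"
  assumes "group G" and "finite (carrier G)" and "order G \<ge> 3"
  shows "(davenport G \<le> omega_grp G \<and>
          omega_grp G \<le> davenport G + small_dav (class_sg G) (class_add G) (class_zero G)) \<and>
         (davenport (G Mod derived G (carrier G))
             \<le> large_dav (class_sg G) (class_add G) (class_zero G) \<and>
          (comm_group G \<longrightarrow> davenport (G Mod derived G (carrier G))
             = large_dav (class_sg G) (class_add G) (class_zero G)))"
proof -
  interpret group G by (rule assms(1))
  let ?Q = "G Mod derived G (carrier G)"
  have "r_coset G (derived G (carrier G)) \<in> hom G ?Q"
    using normal.r_coset_hom_Mod[OF derived_self_is_normal] .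
  moreover have "r_coset G (derived G (carrier G)) ` carrier G = carrier ?Q"
    by (simp add: carrier_FactGroup)
  ultimately have quotient: "davenport ?Q \<le> large_dav (class_sg G) (class_add G) (class_zero G)"
    using davenport_le_large_dav_of_hom[OF derived_quot_is_comm_group] by blast
  moreover have "davenport ?Q = large_dav (class_sg G) (class_add G) (class_zero G)"
    if "comm_group G"
    using quotient order_trans[OF comm_group.large_dav_le_davenport[OF that]
        comm_group.davenport_le_davenport_Mod_derived[OF that]]
    by (rule antisym)
  moreover have "davenport G \<le> omega_grp G"
    using davenport_le_omega_grp[OF assms(2)] assms(3) by (simp add: order_def)
  ultimately show ?thesis
    using omega_grp_le_davenport_plus_small_dav by blast
qed

end
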